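(* For every $\varepsilon>0$ there exists $\delta>0$, depending only on $\varepsilon$, such that the following holds for all sufficiently large $N_0$. If $G$ is a bichromatic graph whose underlying graph is the complete bipartite graph $K_{N_0,N_0}$ and $G$ is $\varepsilon$-color-balanced, then at least one of the left vertex-pair incidence graph $H_L$ and the right vertex-pair incidence graph $H_R$ of $G$ has at least $\delta N_0^3$ edges.
   Context: A bichromatic graph is a triple $G=(V,R,B)$ with $R,B\subseteq\binom{V}{2}$, $R\cap B=\emptyset$ (red and blue edges); its underlying graph is $(V,R\cup B)$. $d_R(G)=|R|/(|R|+|B|)$, and $G$ is $\varepsilon$-color-balanced if $\varepsilon\le d_R(G)\le 1-\varepsilon$. For a bipartite bichromatic graph $G$ with bipartition $V=V_1\sqcup V_2$, the left vertex-pair incidence graph $H_L$ is the bipartite graph with vertex set $V_1\sqcup\binom{V_2}{2}$ in which $u\in V_1$ is adjacent to $\{v_1,v_2\}\in\binom{V_2}{2}$ if and only if $uv_1$ and $uv_2$ are both edges of $G$ and they have different colours. The right vertex-pair incidence graph $H_R$ is defined in the same way with the roles of $V_1$ and $V_2$ swapped (vertex set $V_2\sqcup\binom{V_1}{2}$). *)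

theory Defs
  imports Complex_Main
begin

definition bichromatic :: "'a set \<Rightarrow> 'a set set \<Rightarrow> 'a set set \<Rightarrow> bool" where
  "bichromatic V R B \<longleftrightarrow>
     R \<subseteq> {e. e \<subseteq> V \<and> card e = 2} \<and> B \<subseteq> {e. e \<subseteq> V \<and> card e = 2} \<and> R \<inter> B = {}"

definition complete_bipartite_edges :: "'a set \<Rightarrow> 'a set \<Rightarrow> 'a set set" where
  "complete_bipartite_edges V1 V2 = {{u, v} | u v. u \<in> V1 \<and> v \<in> V2}"

definition red_density :: "'a set set \<Rightarrow> 'a set set \<Rightarrow> real" where
  "red_density R B = real (card R) / (real (card R) + real (card B))"

definition color_balanced :: "real \<Rightarrow> 'a set set \<Rightarrow> 'a set set \<Rightarrow> bool" where
  "color_balanced \<epsilon> R B \<longleftrightarrow> \<epsilon> \<le> red_density R B \<and> red_density R B \<le> 1 - \<epsilon>"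

definition left_incidence_edges ::
  "'a set \<Rightarrow> 'a set \<Rightarrow> 'a set set \<Rightarrow> 'a set set \<Rightarrow> ('a \<times> 'a set) set" where
  "left_incidence_edges V1 V2 R B =
     {(u, p) | u p. u \<in> V1 \<and> p \<subseteq> V2 \<and> card p = 2 \<and>
        (\<exists>v1 v2. p = {v1, v2} \<and>
           (({u, v1} \<in> R \<and> {u, v2} \<in> B) \<or> ({u, v1} \<in> B \<and> {u, v2} \<in> R)))}"

definition right_incidence_edges ::
  "'a set \<Rightarrow> 'a set \<Rightarrow> 'a set set \<Rightarrow> 'a set set \<Rightarrow> ('a \<times> 'a set) set" where
  "right_incidence_edges V1 V2 R B = left_incidence_edges V2 V1 R B"

end

theory Submission
  imports Defs
begin

text \<open>Count pairs (red edge \<open>uv\<close>, blue edge \<open>u'v'\<close>) with \<open>u, u' \<in> V1\<close> and \<open>v, v' \<in> V2\<close>.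
  The cross edge \<open>uv'\<close> is blue or red. If it is blue, \<open>u\<close> sees \<open>v\<close> in red and \<open>v'\<close> in blue,
  an edge of \<open>H_L\<close>; if it is red, \<open>v'\<close> sees \<open>u\<close> in red and \<open>u'\<close> in blue, an edge of \<open>H_R\<close>.
  Recording in addition the unused vertex \<open>u'\<close> resp. \<open>v\<close> makes this assignment injective, so
  \<open>|R| |B| \<le> N\<^sub>0 (|H_L| + |H_R|)\<close>. Colour balance gives \<open>|R| |B| \<ge> \<epsilon>\<^sup>2 N\<^sub>0\<^sup>4\<close>, hence one of
  \<open>H_L\<close>, \<open>H_R\<close> has at least \<open>\<epsilon>\<^sup>2 N\<^sub>0\<^sup>3 / 2\<close> edges, already for every \<open>N\<^sub>0\<close>.\<close>

definition edge_pairs :: "'a set \<Rightarrow> 'a set \<Rightarrow> 'a set set \<Rightarrow> ('a \<times> 'a) set" where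
  "edge_pairs V1 V2 S = {(u, v) \<in> V1 \<times> V2. {u, v} \<in> S}"

lemma bij_betw_edge_pairs:
  assumes "V1 \<inter> V2 = {}" and "S \<subseteq> complete_bipartite_edges V1 V2"
  shows "bij_betw (\<lambda>(u, v). {u, v}) (edge_pairs V1 V2 S) S"
proof (rule bij_betw_imageI)
  show "inj_on (\<lambda>(u, v). {u, v}) (edge_pairs V1 V2 S)"
    using assms(1) by (auto simp: inj_on_def edge_pairs_def doubleton_eq_iff)
  show "(\<lambda>(u, v). {u, v}) ` edge_pairs V1 V2 S = S"
    using assms(2) by (force simp: edge_pairs_def complete_bipartite_edges_def)
qed

lemma card_edge_pairs:
  assumes "V1 \<inter> V2 = {}" and "S \<subseteq> complete_bipartite_edges V1 V2"
  shows "card (edge_pairs V1 V2 S) = card S"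
  using bij_betw_same_card[OF bij_betw_edge_pairs[OF assms]] .

lemma finite_complete_bipartite_edges:
  assumes "finite V1" and "finite V2"
  shows "finite (complete_bipartite_edges V1 V2)"
proof -
  have "complete_bipartite_edges V1 V2 = (\<lambda>(u, v). {u, v}) ` (V1 \<times> V2)"
    by (auto simp: complete_bipartite_edges_def)
  then show ?thesis
    using assms by simp
qed

lemma card_complete_bipartite_edges:
  assumes "V1 \<inter> V2 = {}"
  shows "card (complete_bipartite_edges V1 V2) = card V1 * card V2"
proof -
  have "edge_pairs V1 V2 (complete_bipartite_edges V1 V2) = V1 \<times> V2"
    by (auto simp: edge_pairs_def complete_bipartite_edges_def)
  then show ?thesis
    using card_edge_pairs[OF assms, of "complete_bipartite_edges V1 V2"]
    by (simp add: card_cartesian_product)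
qed

definition cherries :: "'a set \<Rightarrow> 'a set \<Rightarrow> 'a set set \<Rightarrow> 'a set set \<Rightarrow> ('a \<times> 'a \<times> 'a) set" where
  "cherries V1 V2 R B =
     {(u, v, w). u \<in> V1 \<and> v \<in> V2 \<and> w \<in> V2 \<and> {u, v} \<in> R \<and> {u, w} \<in> B}"

lemma bij_betw_cherries_left_incidence_edges:
  assumes "R \<inter> B = {}"
  shows "bij_betw (\<lambda>(u, v, w). (u, {v, w})) (cherries V1 V2 R B) (left_incidence_edges V1 V2 R B)"
proof (rule bij_betw_imageI)
  show "inj_on (\<lambda>(u, v, w). (u, {v, w})) (cherries V1 V2 R B)"
    using assms by (auto simp: inj_on_def cherries_def doubleton_eq_iff)
  have "v \<noteq> w" if "{u, v} \<in> R" "{u, w} \<in> B" for u v w :: 'a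
    using that assms by auto
  then show "(\<lambda>(u, v, w). (u, {v, w})) ` cherries V1 V2 R B = left_incidence_edges V1 V2 R B"
    by (fastforce simp: cherries_def left_incidence_edges_def insert_commute
        intro: image_eqI[where x = "(u, v, w)" for u v w])
qed

lemma card_cherries:
  assumes "R \<inter> B = {}"
  shows "card (cherries V1 V2 R B) = card (left_incidence_edges V1 V2 R B)"
  using bij_betw_same_card[OF bij_betw_cherries_left_incidence_edges[OF assms]] .

lemma finite_cherries:
  assumes "finite V1" and "finite V2"
  shows "finite (cherries V1 V2 R B)"
proof (rule finite_subset)
  show "cherries V1 V2 R B \<subseteq> V1 \<times> V2 \<times> V2"
    by (auto simp: cherries_def)
qed (use assms in simp)

lemma card_red_times_blue_le_cherries:
  assumes "finite V1" and "finite V2"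
    and cover: "\<And>u v. u \<in> V1 \<Longrightarrow> v \<in> V2 \<Longrightarrow> {u, v} \<in> R \<or> {u, v} \<in> B"
  shows "card (edge_pairs V1 V2 R) * card (edge_pairs V1 V2 B)
           \<le> card (cherries V1 V2 R B) * card V1 + card (cherries V2 V1 R B) * card V2"
proof -
  let ?T = "(cherries V1 V2 R B \<times> V1) <+> (cherries V2 V1 R B \<times> V2)"
  define f :: "('a \<times> 'a) \<times> ('a \<times> 'a) \<Rightarrow> ('a \<times> 'a \<times> 'a) \<times> 'a + ('a \<times> 'a \<times> 'a) \<times> 'a"
    where "f = (\<lambda>((u, v), (u', v')).
                 if {u, v'} \<in> B then Inl ((u, v, v'), u') else Inr ((v', u, u'), v))"
  have "f ` (edge_pairs V1 V2 R \<times> edge_pairs V1 V2 B) \<subseteq> ?T"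
    by (auto simp: f_def edge_pairs_def cherries_def insert_commute) (use cover in blast)
  moreover have "inj_on f (edge_pairs V1 V2 R \<times> edge_pairs V1 V2 B)"
    by (auto simp: inj_on_def f_def split: if_splits)
  moreover have "finite ?T"
    using assms(1,2) by (simp add: finite_cherries)
  ultimately have "card (edge_pairs V1 V2 R \<times> edge_pairs V1 V2 B) \<le> card ?T"
    by (intro card_inj_on_le)
  then show ?thesis
    using assms(1,2) by (simp add: card_cartesian_product card_Plus finite_cherries)
qed

lemma card_red_times_blue_le:
  assumes "finite V1" and "finite V2" and "V1 \<inter> V2 = {}" and "R \<inter> B = {}"
    and "R \<union> B = complete_bipartite_edges V1 V2"
  shows "card R * card B \<le> card V1 * card (left_incidence_edges V1 V2 R B)
                          + card V2 * card (right_incidence_edges V1 V2 R B)"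
proof -
  have "card R = card (edge_pairs V1 V2 R)" and "card B = card (edge_pairs V1 V2 B)"
    using card_edge_pairs[OF assms(3)] assms(5) by (metis Un_upper1 Un_upper2)+
  moreover have "\<And>u v. u \<in> V1 \<Longrightarrow> v \<in> V2 \<Longrightarrow> {u, v} \<in> R \<or> {u, v} \<in> B"
    using assms(5) by (auto simp: complete_bipartite_edges_def)
  ultimately have "card R * card B
      \<le> card (cherries V1 V2 R B) * card V1 + card (cherries V2 V1 R B) * card V2"
    using card_red_times_blue_le_cherries[OF assms(1,2)] by simp
  then show ?thesis
    using card_cherries[OF assms(4)] by (simp add: right_incidence_edges_def mult.commute)
qed

lemma color_balanced_product_ge:
  assumes "color_balanced \<epsilon> R B" and "0 \<le> \<epsilon>"
  shows "\<epsilon>\<^sup>2 * (real (card R) + real (card B))\<^sup>2 \<le> real (card R) * real (card B)"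
proof (cases "card R + card B = 0")
  case False
  then have "real (card R) + real (card B) > 0"
    by (simp flip: of_nat_add)
  then have "\<epsilon> * (real (card R) + real (card B)) \<le> real (card R)"
    and "\<epsilon> * (real (card R) + real (card B)) \<le> real (card B)"
    using assms(1) by (auto simp: color_balanced_def red_density_def field_simps)
  then have "(\<epsilon> * (real (card R) + real (card B))) * (\<epsilon> * (real (card R) + real (card B)))
      \<le> real (card R) * real (card B)"
    using assms(2) by (intro mult_mono) simp_all
  then show ?thesis
    by (simp add: power2_eq_square mult_ac)
qed simp

theorem lemma4p2:
  fixes \<epsilon> :: real
  assumes "\<epsilon> > 0"
  shows "\<exists>\<delta>>0. \<exists>N. \<forall>N0 \<ge> N. \<forall>(V1 :: nat set) V2 R B.
     finite V1 \<and> finite V2 \<and> V1 \<inter> V2 = {} \<and> card V1 = N0 \<and> card V2 = N0 \<and>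
     bichromatic (V1 \<union> V2) R B \<and>
     R \<union> B = complete_bipartite_edges V1 V2 \<and>
     color_balanced \<epsilon> R B
     \<longrightarrow> real (card (left_incidence_edges V1 V2 R B)) \<ge> \<delta> * real N0 ^ 3 \<or>
         real (card (right_incidence_edges V1 V2 R B)) \<ge> \<delta> * real N0 ^ 3"
proof (intro exI[of _ "\<epsilon>\<^sup>2 / 2"] conjI exI[of _ 0] allI impI)
  show "\<epsilon>\<^sup>2 / 2 > 0"
    using assms by simp
  fix N0 :: nat and V1 V2 :: "nat set" and R B
  assume "finite V1 \<and> finite V2 \<and> V1 \<inter> V2 = {} \<and> card V1 = N0 \<and> card V2 = N0 \<and>
     bichromatic (V1 \<union> V2) R B \<and> R \<union> B = complete_bipartite_edges V1 V2 \<and>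
     color_balanced \<epsilon> R B"
  then have fin: "finite V1" "finite V2" and disj: "V1 \<inter> V2 = {}" "R \<inter> B = {}"
    and card: "card V1 = N0" "card V2 = N0" and complete: "R \<union> B = complete_bipartite_edges V1 V2"
    and balanced: "color_balanced \<epsilon> R B"
    by (auto simp: bichromatic_def)
  let ?L = "real (card (left_incidence_edges V1 V2 R B))"
  let ?R = "real (card (right_incidence_edges V1 V2 R B))"
  have "finite R" and "finite B"
    using finite_complete_bipartite_edges[OF fin] complete by (metis finite_Un)+
  then have "card R + card B = card (complete_bipartite_edges V1 V2)"
    using card_Un_disjoint disj(2) complete by metis
  also have "\<dots> = N0\<^sup>2"
    using card_complete_bipartite_edges[OF disj(1)] card by (simp add: power2_eq_square)
  finally have "\<epsilon>\<^sup>2 * real N0 ^ 4 \<le> real (card R) * real (card B)"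
    using color_balanced_product_ge[OF balanced] assms
    by (simp flip: of_nat_add of_nat_power power_mult)
  also have "\<dots> \<le> real N0 * (?L + ?R)"
    using card_red_times_blue_le[OF fin disj complete] card
    by (simp add: distrib_left flip: of_nat_mult of_nat_add)
  finally have "real N0 * (\<epsilon>\<^sup>2 * real N0 ^ 3) \<le> real N0 * (?L + ?R)"
    by (simp add: power_numeral_reduce mult_ac)
  then have "\<epsilon>\<^sup>2 * real N0 ^ 3 \<le> ?L + ?R"
    by (cases "N0 = 0") simp_all
  then show "?L \<ge> \<epsilon>\<^sup>2 / 2 * real N0 ^ 3 \<or> ?R \<ge> \<epsilon>\<^sup>2 / 2 * real N0 ^ 3"
    by linarith
qed

end
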